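(* Let $G$ be an abelian group that is torsion-free or cyclic of prime order. Let $A=\{a_1,\dots,a_{n+1}\}\subsetneq G$ be a proper subset of $G$ with $n+1$ distinct elements, and define $A_i=-a_i+A=\{-a_i+a: a\in A\}$ for $i\in[n]$. If $A$ is not a progression, then $\bigcap_{i\in[n]}A_i=\{0\}$.
   Context: A progression of length $k$ with difference $x$ and initial term $a$ ($x,a\in G$) is a subset of $G$ of the form $\{a,a+x,a+2x,\dots,a+(k-1)x\}$. *)

theory Defs
  imports "HOL-Computational_Algebra.Primes"
begin

definition nsmul :: "nat \<Rightarrow> 'a::ab_group_add \<Rightarrow> 'a" where
  "nsmul k x = (((+) x) ^^ k) 0"

definition torsion_free :: "'a::ab_group_add itself \<Rightarrow> bool" where
  "torsion_free _ \<longleftrightarrow> (\<forall>(x::'a) k. k > 0 \<longrightarrow> nsmul k x = 0 \<longrightarrow> x = 0)"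

definition cyclic_prime_order :: "'a::ab_group_add itself \<Rightarrow> bool" where
  "cyclic_prime_order _ \<longleftrightarrow> finite (UNIV :: 'a set) \<and> prime (card (UNIV :: 'a set)) \<and>
     (\<exists>g::'a. \<forall>y. \<exists>k. y = nsmul k g)"

definition progression :: "nat \<Rightarrow> 'a::ab_group_add \<Rightarrow> 'a \<Rightarrow> 'a set" where
  "progression k x a = {a + nsmul j x | j. j < k}"

definition is_progression :: "'a::ab_group_add set \<Rightarrow> bool" where
  "is_progression A \<longleftrightarrow> (\<exists>k x a. A = progression k x a)"

end

theory Submission
  imports Defs "HOL-Algebra.Multiplicative_Group"
begin

text \<open>If \<open>z \<noteq> 0\<close> lies in every \<open>A\<^sub>i\<close>, then \<open>a\<^sub>i + z \<in> A\<close> for \<open>i \<le> n\<close>, i.e. translation by \<open>z\<close>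
  maps \<open>A\<close> minus one point into \<open>A\<close>, hence onto \<open>A\<close> minus one point \<open>s\<close>. Following \<open>s, s + z, s + 2z, \<dots>\<close>
  until the orbit leaves \<open>A\<close> gives a progression \<open>P \<subseteq> A\<close>; the rest \<open>A - P\<close> is closed under
  subtracting \<open>z\<close>, so if nonempty it would force \<open>d z = 0\<close> for some \<open>0 < d \<le> |A|\<close>. In a torsion-free
  group, or a group of prime order \<open>p > |A|\<close>, this is impossible, so \<open>A = P\<close>.\<close>

lemma nsmul_0 [simp]: "nsmul 0 x = 0"
  by (simp add: nsmul_def)

lemma nsmul_Suc [simp]: "nsmul (Suc k) x = x + nsmul k x"
  by (simp add: nsmul_def)

lemma nsmul_add: "nsmul (i + j) x = nsmul i x + nsmul j x"
  by (induction i) (simp_all add: add.assoc)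

lemma nsmul_minus: "nsmul k (- x) = - nsmul k x"
  by (induction k) (simp_all add: add.commute)

lemma nsmul_eq_imp_nsmul_diff_eq_0:
  assumes "i < j" "nsmul i x = nsmul j x"
  shows "nsmul (j - i) x = 0"
  using assms nsmul_add[of i "j - i" x] by simp

definition additive_group :: "'a::ab_group_add monoid" where
  "additive_group = \<lparr>carrier = UNIV, monoid.mult = (+), one = 0\<rparr>"

lemma group_additive_group: "group additive_group"
  unfolding additive_group_def
  by (rule groupI) (auto simp: add.assoc intro: exI[of _ "- _"])

lemma additive_group_pow: "x [^]\<^bsub>additive_group\<^esub> k = nsmul k x"
  by (induction k) (simp_all add: additive_group_def add.commute)

lemma card_le_if_nsmul_eq_0:
  fixes z :: "'a::ab_group_add"
  assumes G: "torsion_free TYPE('a) \<or> cyclic_prime_order TYPE('a)"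
    and "z \<noteq> 0" "0 < d" "nsmul d z = 0"
  shows "finite (UNIV :: 'a set) \<and> card (UNIV :: 'a set) \<le> d"
  using G
proof
  assume "torsion_free TYPE('a)"
  then show ?thesis using assms(2-4) unfolding torsion_free_def by blast
next
  assume "cyclic_prime_order TYPE('a)"
  then have fin: "finite (UNIV :: 'a set)" and p: "prime (card (UNIV :: 'a set))"
    unfolding cyclic_prime_order_def by auto
  interpret group "additive_group :: 'a monoid" by (rule group_additive_group)
  have z: "z \<in> carrier additive_group" by (simp add: additive_group_def)
  have "ord z dvd card (UNIV :: 'a set)"
    using ord_dvd_group_order[OF z] by (simp add: order_def additive_group_def)
  moreover have "ord z \<noteq> 1"
    using ord_eq_1[OF z] \<open>z \<noteq> 0\<close> by (simp add: additive_group_def)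
  ultimately have "ord z = card (UNIV :: 'a set)"
    using p prime_nat_iff by blast
  moreover have "\<one>\<^bsub>additive_group\<^esub> = (0 :: 'a)" by (simp add: additive_group_def)
  then have "ord z dvd d"
    using pow_eq_id[OF z, of d] \<open>nsmul d z = 0\<close> by (simp add: additive_group_pow)
  ultimately show ?thesis using fin \<open>0 < d\<close> by (simp add: dvd_imp_le)
qed

lemma nsmul_neq_0_if_le_card_proper_subset:
  fixes z :: "'a::ab_group_add" and A :: "'a set"
  assumes G: "torsion_free TYPE('a) \<or> cyclic_prime_order TYPE('a)"
    and "finite A" "A \<noteq> UNIV" "z \<noteq> 0" "0 < d" "d \<le> card A"
  shows "nsmul d z \<noteq> 0"
proof
  assume "nsmul d z = 0"
  then have "finite (UNIV :: 'a set)" "card (UNIV :: 'a set) \<le> d"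
    using card_le_if_nsmul_eq_0[OF G \<open>z \<noteq> 0\<close> \<open>0 < d\<close>] by auto
  moreover have "card A < card (UNIV :: 'a set)"
    using \<open>A \<noteq> UNIV\<close> calculation(1) by (intro psubset_card_mono) auto
  ultimately show False using \<open>d \<le> card A\<close> by simp
qed

lemma nsmul_eq_0_if_orbit_in_finite_set:
  fixes z :: "'a::ab_group_add"
  assumes "finite S" and orbit: "\<And>k. k \<le> card S \<Longrightarrow> x + nsmul k z \<in> S"
  obtains d where "0 < d" "d \<le> card S" "nsmul d z = 0"
proof -
  let ?f = "\<lambda>k. x + nsmul k z"
  have "?f ` {0..card S} \<subseteq> S" using orbit by auto
  then have "card (?f ` {0..card S}) \<le> card S" by (rule card_mono[OF \<open>finite S\<close>])
  then have "\<not> inj_on ?f {0..card S}" by (auto dest: card_image)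
  then obtain i j where ij: "i \<le> card S" "j \<le> card S" "i \<noteq> j" "nsmul i z = nsmul j z"
    unfolding inj_on_def by auto
  obtain i j where "i < j" "j \<le> card S" "nsmul i z = nsmul j z"
    using ij by (metis linorder_neqE_nat)
  then show ?thesis
    using that[of "j - i"] nsmul_eq_imp_nsmul_diff_eq_0[of i j z] by simp
qed

lemma translate_remove_eq_remove:
  fixes A :: "'a::ab_group_add set"
  assumes "finite A" "t \<in> A" and sub: "(\<lambda>y. y + z) ` (A - {t}) \<subseteq> A"
  obtains s where "s \<in> A" "(\<lambda>y. y + z) ` (A - {t}) = A - {s}"
proof -
  have card_img: "card ((\<lambda>y. y + z) ` (A - {t})) = card (A - {t})"
    by (simp add: card_image)
  also have "\<dots> < card A" using \<open>finite A\<close> \<open>t \<in> A\<close> by (rule card_Diff1_less)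
  finally obtain s where s: "s \<in> A" "s \<notin> (\<lambda>y. y + z) ` (A - {t})"
    using sub by (metis less_irrefl subsetI subset_antisym)
  then have "(\<lambda>y. y + z) ` (A - {t}) \<subseteq> A - {s}" using sub by auto
  moreover have "card (A - {s}) = card (A - {t})" using s assms by simp
  ultimately show ?thesis
    using that[of s] s card_img \<open>finite A\<close> by (metis card_subset_eq finite_Diff)
qed

lemma eq_empty_if_closed_under_minus:
  fixes z :: "'a::ab_group_add"
  assumes "finite R" and closed: "\<And>y. y \<in> R \<Longrightarrow> y - z \<in> R"
    and torsion: "\<And>d. 0 < d \<Longrightarrow> d \<le> card R \<Longrightarrow> nsmul d z \<noteq> 0"
  shows "R = {}"
proof (rule ccontr)
  assume "R \<noteq> {}"
  then obtain y where "y \<in> R" by blast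
  have "y + nsmul k (- z) \<in> R" for k
  proof (induction k)
    case (Suc k)
    have "y + nsmul (Suc k) (- z) = (y + nsmul k (- z)) - z" by (simp add: algebra_simps)
    then show ?case using closed[OF Suc.IH] by metis
  qed (simp add: \<open>y \<in> R\<close>)
  then obtain d where "0 < d" "d \<le> card R" "nsmul d (- z) = 0"
    using nsmul_eq_0_if_orbit_in_finite_set[OF \<open>finite R\<close>] by blast
  then show False using torsion by (simp add: nsmul_minus)
qed

lemma is_progression_if_translate_remove_subset:
  fixes A :: "'a::ab_group_add set"
  assumes fin: "finite A" and "t \<in> A" and sub: "(\<lambda>y. y + z) ` (A - {t}) \<subseteq> A"
    and torsion: "\<And>d. 0 < d \<Longrightarrow> d \<le> card A \<Longrightarrow> nsmul d z \<noteq> 0"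
  shows "is_progression A"
proof -
  obtain s where "s \<in> A" and img: "(\<lambda>y. y + z) ` (A - {t}) = A - {s}"
    using translate_remove_eq_remove[OF fin \<open>t \<in> A\<close> sub] .
  have step_back: "y - z \<in> A" if "y \<in> A" "y \<noteq> s" for y
  proof -
    have "y \<in> (\<lambda>y. y + z) ` (A - {t})" using that img by blast
    then show ?thesis by auto
  qed
  define f where "f k = s + nsmul k z" for k
  have "\<exists>k. f k \<notin> A"
    using nsmul_eq_0_if_orbit_in_finite_set[OF fin, of s z] torsion unfolding f_def by metis
  define m where "m = (LEAST k. f k \<notin> A)"
  have fm: "f m \<notin> A" and below: "\<And>k. k < m \<Longrightarrow> f k \<in> A"
    using LeastI_ex[OF \<open>\<exists>k. f k \<notin> A\<close>] not_less_Least unfolding m_def by blast+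
  define R where "R = A - f ` {..<m}"
  have "f 0 = s" by (simp add: f_def)
  have R_closed: "y - z \<in> R" if "y \<in> R" for y
  proof -
    have "y \<in> A" "y \<notin> f ` {..<m}" using that by (auto simp: R_def)
    moreover have "0 < m" using fm \<open>s \<in> A\<close> \<open>f 0 = s\<close> by (cases m) auto
    ultimately have "y \<noteq> s" using \<open>f 0 = s\<close> by force
    have "y - z \<notin> f ` {..<m}"
    proof
      assume "y - z \<in> f ` {..<m}"
      then obtain k where "k < m" "f (Suc k) = y" by (auto simp: f_def algebra_simps)
      then show False
        using \<open>y \<in> A\<close> \<open>y \<notin> f ` {..<m}\<close> fm by (metis Suc_lessI lessThan_iff rev_image_eqI)
    qed
    then show ?thesis using step_back[OF \<open>y \<in> A\<close> \<open>y \<noteq> s\<close>] by (simp add: R_def)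
  qed
  have "R = {}"
  proof (rule eq_empty_if_closed_under_minus[OF _ R_closed])
    show "finite R" using fin by (simp add: R_def)
    have "card R \<le> card A" using fin by (simp add: R_def card_mono)
    then show "nsmul d z \<noteq> 0" if "0 < d" "d \<le> card R" for d
      using torsion that by simp
  qed
  then have "A = progression m z s"
    using below by (auto simp: R_def progression_def f_def)
  then show ?thesis unfolding is_progression_def by blast
qed

theorem lemma3p11:
  fixes a :: "nat \<Rightarrow> 'a::ab_group_add" and n :: nat and A :: "'a set"
  assumes G: "torsion_free TYPE('a) \<or> cyclic_prime_order TYPE('a)"
    and A_def: "A = a ` {1..n+1}"
    and distinct: "inj_on a {1..n+1}"
    and proper: "A \<noteq> UNIV"
    and notprog: "\<not> is_progression A"
  shows "(\<Inter>i\<in>{1..n}. (\<lambda>x. - a i + x) ` A) = {0}"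
proof -
  have "z = 0" if z: "z \<in> (\<Inter>i\<in>{1..n}. (\<lambda>x. - a i + x) ` A)" for z
  proof (rule ccontr)
    assume "z \<noteq> 0"
    have fin: "finite A" using A_def by simp
    have "a (n + 1) \<notin> a ` {1..n}"
      using inj_on_image_mem_iff[OF distinct, of "n + 1" "{1..n}"] by simp
    then have "A - {a (n + 1)} = a ` {1..n}"
      by (auto simp: A_def atLeastAtMostSuc_conv)
    moreover have "a i + z \<in> A" if "i \<in> {1..n}" for i
    proof -
      from z that obtain y where "y \<in> A" "z = - a i + y" by blast
      then show ?thesis by simp
    qed
    ultimately have "(\<lambda>y. y + z) ` (A - {a (n + 1)}) \<subseteq> A" by auto
    moreover have "nsmul d z \<noteq> 0" if "0 < d" "d \<le> card A" for d
      using nsmul_neq_0_if_le_card_proper_subset[OF G fin proper \<open>z \<noteq> 0\<close> that] .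
    moreover have "a (n + 1) \<in> A" using A_def by simp
    ultimately show False
      using is_progression_if_translate_remove_subset[OF fin] notprog by blast
  qed
  moreover have "0 \<in> (\<lambda>x. - a i + x) ` A" if "i \<in> {1..n}" for i
    using that A_def by (intro image_eqI[of _ _ "a i"]) auto
  ultimately show ?thesis by blast
qed

end
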